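(* Let $\Omega\subseteq\mathbb{C}$ be a domain and let $d_\Omega$ be a distance on $\Omega$ which is continuous as a function $\Omega\times\Omega\to[0,\infty)$ (with respect to the Euclidean topology) and inner. Then the topology induced by $d_\Omega$ coincides with the Euclidean topology on $\Omega$.
   Context: Fix an integer $n\ge0$. A $C^n$-path from $x$ to $y$ in $\Omega$ is a continuous map $\gamma:[0,1]\to\Omega$, $n$ times differentiable on $(0,1)$, with $\gamma(0)=x$, $\gamma(1)=y$; a piecewise $C^n$-path is a finite concatenation of such paths. For a distance $d_\Omega$ on $\Omega$ and a path $\gamma$, its length is $L_{d_\Omega}(\gamma)=\sup_\delta\sum_{j=1}^k d_\Omega(\gamma(t_{j-1}),\gamma(t_j))$, the supremum over all partitions $\delta=\{0=t_0<t_1<\dots<t_k=1\}$. The inner pseudodistance is $d_\Omega^{i}(x,y)=\inf L_{d_\Omega}(\gamma)$ over piecewise $C^n$-paths $\gamma$ from $x$ to $y$; always $d_\Omega\le d^i_\Omega$, and $d_\Omega$ is called inner if $d_\Omega=d_\Omega^i$. *)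

theory Defs
  imports "HOL-Analysis.Analysis"
begin

definition unit_partition :: "real list \<Rightarrow> bool" where
  "unit_partition ts \<longleftrightarrow> length ts \<ge> 2 \<and> sorted_wrt (<) ts \<and> hd ts = 0 \<and> last ts = 1"

definition ntimes_differentiable_01 :: "nat \<Rightarrow> (real \<Rightarrow> complex) \<Rightarrow> bool" where
  "ntimes_differentiable_01 n g \<longleftrightarrow>
     (\<exists>D :: nat \<Rightarrow> real \<Rightarrow> complex. D 0 = g \<and>
        (\<forall>k<n. \<forall>t\<in>{0<..<1}. (D k has_vector_derivative D (Suc k) t) (at t)))"

definition Cn_path :: "nat \<Rightarrow> complex set \<Rightarrow> complex \<Rightarrow> complex \<Rightarrow> (real \<Rightarrow> complex) \<Rightarrow> bool" where
  "Cn_path n \<Omega> x y g \<longleftrightarrow> continuous_on {0..1} g \<and> g ` {0..1} \<subseteq> \<Omega> \<and>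
     ntimes_differentiable_01 n g \<and> g 0 = x \<and> g 1 = y"

text \<open>Piecewise C^n-path: finite concatenation of C^n-paths, i.e. there is a partition
  of [0,1] such that each piece (affinely reparametrised to [0,1]) is a C^n-path.\<close>
definition piecewise_Cn_path :: "nat \<Rightarrow> complex set \<Rightarrow> complex \<Rightarrow> complex \<Rightarrow> (real \<Rightarrow> complex) \<Rightarrow> bool" where
  "piecewise_Cn_path n \<Omega> x y g \<longleftrightarrow> g 0 = x \<and> g 1 = y \<and>
     (\<exists>ts. unit_partition ts \<and>
        (\<forall>j < length ts - 1. Cn_path n \<Omega> (g (ts ! j)) (g (ts ! Suc j))
              (\<lambda>s. g ((1 - s) * ts ! j + s * ts ! Suc j))))"

definition path_length :: "(complex \<Rightarrow> complex \<Rightarrow> real) \<Rightarrow> (real \<Rightarrow> complex) \<Rightarrow> ereal" where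
  "path_length d g = (SUP ts \<in> {ts. unit_partition ts}.
      ereal (\<Sum>j < length ts - 1. d (g (ts ! j)) (g (ts ! Suc j))))"

definition inner_dist :: "nat \<Rightarrow> complex set \<Rightarrow> (complex \<Rightarrow> complex \<Rightarrow> real) \<Rightarrow> complex \<Rightarrow> complex \<Rightarrow> ereal" where
  "inner_dist n \<Omega> d x y = (INF g \<in> {g. piecewise_Cn_path n \<Omega> x y g}. path_length d g)"

definition is_distance_on :: "complex set \<Rightarrow> (complex \<Rightarrow> complex \<Rightarrow> real) \<Rightarrow> bool" where
  "is_distance_on \<Omega> d \<longleftrightarrow> (\<forall>x\<in>\<Omega>. \<forall>y\<in>\<Omega>. d x y \<ge> 0 \<and> (d x y = 0 \<longleftrightarrow> x = y) \<and> d x y = d y x)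
     \<and> (\<forall>x\<in>\<Omega>. \<forall>y\<in>\<Omega>. \<forall>z\<in>\<Omega>. d x z \<le> d x y + d y z)"

definition is_inner :: "nat \<Rightarrow> complex set \<Rightarrow> (complex \<Rightarrow> complex \<Rightarrow> real) \<Rightarrow> bool" where
  "is_inner n \<Omega> d \<longleftrightarrow> (\<forall>x\<in>\<Omega>. \<forall>y\<in>\<Omega>. ereal (d x y) = inner_dist n \<Omega> d x y)"

definition d_open :: "complex set \<Rightarrow> (complex \<Rightarrow> complex \<Rightarrow> real) \<Rightarrow> complex set \<Rightarrow> bool" where
  "d_open \<Omega> d U \<longleftrightarrow> U \<subseteq> \<Omega> \<and> (\<forall>x\<in>U. \<exists>r>0. {y\<in>\<Omega>. d x y < r} \<subseteq> U)"

end

theory Submission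
  imports Defs
begin

text \<open>A continuous distance has Euclidean-open balls, so every d-open set is open. Conversely,
  take a closed Euclidean ball of radius \<rho> around x inside \<Omega> and let m > 0 be the minimum of
  d x on its boundary sphere (a compact set not containing x). A path from x to a point y
  outside the ball must cross the sphere at some z, and already the partition through the
  crossing time shows that its d-length is at least d x z \<ge> m. Since d is inner, d x y \<ge> m,
  so the d-ball of radius m around x lies in the Euclidean ball.\<close>

lemma nat_crossing_index:
  assumes "P 0" and "\<not> P N"
  shows "\<exists>j<N. P j \<and> \<not> P (Suc j)"
  using assms
proof (induction N)
  case (Suc N)
  then show ?case by (cases "P N") (auto intro: less_SucI)
qed simp

lemma unit_partition_ends:
  assumes "unit_partition ts"
  shows "2 \<le> length ts" and "ts ! 0 = 0" and "ts ! (length ts - 1) = 1"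
proof -
  show "2 \<le> length ts" using assms unfolding unit_partition_def by simp
  then have "ts \<noteq> []" by auto
  then show "ts ! 0 = 0" and "ts ! (length ts - 1) = 1"
    using assms unfolding unit_partition_def by (simp_all add: hd_conv_nth last_conv_nth)
qed

lemma unit_partition_consecutive:
  assumes "unit_partition ts" and "j < length ts - 1"
  shows "0 \<le> ts ! j" and "ts ! j < ts ! Suc j" and "ts ! Suc j \<le> 1"
proof -
  have sw: "sorted_wrt (<) ts" using assms(1) unfolding unit_partition_def by simp
  note first = unit_partition_ends(2)[OF assms(1)] and final = unit_partition_ends(3)[OF assms(1)]
  have mono: "ts ! i \<le> ts ! k" if "i \<le> k" "k < length ts" for i k
    using sorted_wrt_nth_less[OF sw, of i k] that by (cases "i = k") auto
  show "0 \<le> ts ! j" using mono[of 0 j] assms(2) first by simp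
  show "ts ! j < ts ! Suc j" using sorted_wrt_nth_less[OF sw, of j "Suc j"] assms(2) by simp
  show "ts ! Suc j \<le> 1" using mono[of "Suc j" "length ts - 1"] assms(2) final by simp
qed

lemma path_length_ge_endpoints: "ereal (d (g 0) (g 1)) \<le> path_length d g"
proof -
  have "unit_partition [0, 1]" by (simp add: unit_partition_def)
  then show ?thesis
    unfolding path_length_def by (force intro: SUP_upper2)
qed

lemma path_length_ge_initial_dist:
  assumes "0 < t" and "t \<le> 1" and "0 \<le> d (g t) (g 1)"
  shows "ereal (d (g 0) (g t)) \<le> path_length d g"
proof (cases "t = 1")
  case True
  then show ?thesis using path_length_ge_endpoints by simp
next
  case False
  then have "unit_partition [0, t, 1]" using assms by (simp add: unit_partition_def)
  then have "ereal (d (g 0) (g t) + d (g t) (g 1)) \<le> path_length d g"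
    unfolding path_length_def
    by (force intro: SUP_upper2 simp: numeral_2_eq_2 lessThan_Suc)
  then show ?thesis using assms(3) by (smt (verit) ereal_less_eq(3) order_trans)
qed

text \<open>A piecewise path need not be continuous at the partition points, so the crossing is
  located on a single piece.\<close>
lemma piecewise_Cn_path_crosses_sphere:
  assumes "piecewise_Cn_path n \<Omega> x y g" and "0 < \<rho>" and "y \<notin> ball x \<rho>"
  shows "\<exists>t. 0 < t \<and> t \<le> 1 \<and> dist x (g t) = \<rho>"
proof -
  obtain ts where g0: "g 0 = x" and g1: "g 1 = y" and up: "unit_partition ts"
    and pieces: "\<forall>j < length ts - 1. Cn_path n \<Omega> (g (ts ! j)) (g (ts ! Suc j))
                   (\<lambda>s. g ((1 - s) * ts ! j + s * ts ! Suc j))"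
    using assms(1) unfolding piecewise_Cn_path_def by blast
  obtain j where j: "j < length ts - 1"
    and inside: "g (ts ! j) \<in> ball x \<rho>" and outside: "g (ts ! Suc j) \<notin> ball x \<rho>"
    using nat_crossing_index[where P = "\<lambda>j. g (ts ! j) \<in> ball x \<rho>" and N = "length ts - 1"]
      unit_partition_ends[OF up] g0 g1 assms(2,3) by auto
  define a b where "a = ts ! j" and "b = ts ! Suc j"
  have ab: "0 \<le> a" "a < b" "b \<le> 1"
    using unit_partition_consecutive[OF up j] unfolding a_def b_def by auto
  define h where "h = (\<lambda>s. g ((1 - s) * a + s * b))"
  have "continuous_on {0..1} h"
    using pieces j unfolding h_def a_def b_def Cn_path_def by auto
  then have "continuous_on {0..1} (\<lambda>s. dist x (h s))"
    by (intro continuous_intros)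
  moreover have "dist x (h 0) \<le> \<rho>" "\<rho> \<le> dist x (h 1)"
    using inside outside unfolding h_def a_def b_def by auto
  ultimately obtain s where s: "0 \<le> s" "s \<le> 1" and hs: "dist x (h s) = \<rho>"
    using IVT'[of "\<lambda>s. dist x (h s)" 0 \<rho> 1] by auto
  define t where "t = (1 - s) * a + s * b"
  have "a \<le> t" "t \<le> b"
    using s ab mult_left_mono[of a b s] mult_left_mono[of a b "1 - s"]
    unfolding t_def by (auto simp: algebra_simps)
  moreover have "dist x (g t) = \<rho>" using hs unfolding h_def t_def .
  moreover from this have "t \<noteq> 0" using g0 assms(2) by auto
  ultimately show ?thesis using ab by (intro exI[of _ t]) auto
qed

lemma inner_dist_ge_sphere_inf:
  assumes dist: "is_distance_on \<Omega> d" and ball: "cball x \<rho> \<subseteq> \<Omega>" and "0 < \<rho>"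
    and m: "\<And>z. z \<in> sphere x \<rho> \<Longrightarrow> m \<le> d x z"
    and "y \<in> \<Omega>" and "y \<notin> ball x \<rho>"
  shows "ereal m \<le> inner_dist n \<Omega> d x y"
  unfolding inner_dist_def
proof (rule INF_greatest)
  fix g assume "g \<in> {g. piecewise_Cn_path n \<Omega> x y g}"
  then have path: "piecewise_Cn_path n \<Omega> x y g" by simp
  then obtain t where t: "0 < t" "t \<le> 1" and z: "dist x (g t) = \<rho>"
    using piecewise_Cn_path_crosses_sphere assms(3,6) by blast
  have "g t \<in> \<Omega>" using z ball by auto
  then have "0 \<le> d (g t) (g 1)"
    using dist path \<open>y \<in> \<Omega>\<close> unfolding is_distance_on_def piecewise_Cn_path_def by auto
  then have "ereal (d x (g t)) \<le> path_length d g"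
    using path_length_ge_initial_dist[OF t] path unfolding piecewise_Cn_path_def by auto
  moreover have "m \<le> d x (g t)" using m z by simp
  ultimately show "ereal m \<le> path_length d g" by (metis ereal_less_eq(3) order_trans)
qed

lemma inner_distance_ball_subset_ball:
  assumes dist: "is_distance_on \<Omega> d" and cont: "continuous_on \<Omega> (d x)"
    and inner: "is_inner n \<Omega> d"
    and ball: "cball x \<rho> \<subseteq> \<Omega>" and "0 < \<rho>"
  shows "\<exists>r>0. {y\<in>\<Omega>. d x y < r} \<subseteq> ball x \<rho>"
proof -
  have x: "x \<in> \<Omega>" and sphere: "sphere x \<rho> \<subseteq> \<Omega>" using ball \<open>0 < \<rho>\<close> by auto
  have "sphere x \<rho> \<noteq> {}" using \<open>0 < \<rho>\<close> by simp
  moreover have "continuous_on (sphere x \<rho>) (d x)" using cont sphere continuous_on_subset by blast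
  ultimately obtain z0 where z0: "z0 \<in> sphere x \<rho>" and min: "\<And>z. z \<in> sphere x \<rho> \<Longrightarrow> d x z0 \<le> d x z"
    using continuous_attains_inf[of "sphere x \<rho>" "d x"] by auto
  have "z0 \<noteq> x" "z0 \<in> \<Omega>" using z0 sphere \<open>0 < \<rho>\<close> by auto
  then have "0 < d x z0" using dist x unfolding is_distance_on_def by (metis order_le_less)
  moreover have "y \<in> ball x \<rho>" if "y \<in> \<Omega>" "d x y < d x z0" for y
  proof (rule ccontr)
    assume "y \<notin> ball x \<rho>"
    then have "ereal (d x z0) \<le> inner_dist n \<Omega> d x y"
      using inner_dist_ge_sphere_inf[OF dist ball \<open>0 < \<rho>\<close> min] that by blast
    also have "\<dots> = ereal (d x y)" using inner x that unfolding is_inner_def by auto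
    finally show False using that by simp
  qed
  ultimately show ?thesis by blast
qed

lemma d_open_imp_open:
  assumes "open \<Omega>" and dist: "is_distance_on \<Omega> d"
    and cont: "\<And>x. x \<in> \<Omega> \<Longrightarrow> continuous_on \<Omega> (d x)"
    and U: "d_open \<Omega> d U"
  shows "open U"
proof (subst open_subopen, intro ballI)
  fix x assume "x \<in> U"
  then obtain r where x: "x \<in> \<Omega>" and "r > 0" and r: "{y\<in>\<Omega>. d x y < r} \<subseteq> U"
    using U unfolding d_open_def by blast
  have "open (\<Omega> \<inter> d x -` {..<r})"
    using continuous_open_preimage[OF cont[OF x] \<open>open \<Omega>\<close> open_lessThan] by simp
  moreover have "d x x = 0" using dist x unfolding is_distance_on_def by blast
  then have "x \<in> \<Omega> \<inter> d x -` {..<r}" using x \<open>r > 0\<close> by simp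
  moreover have "\<Omega> \<inter> d x -` {..<r} \<subseteq> U" using r by auto
  ultimately show "\<exists>T. open T \<and> x \<in> T \<and> T \<subseteq> U" by blast
qed

lemma open_imp_d_open:
  assumes "is_distance_on \<Omega> d" and "is_inner n \<Omega> d"
    and cont: "\<And>x. x \<in> \<Omega> \<Longrightarrow> continuous_on \<Omega> (d x)"
    and "open U" and "U \<subseteq> \<Omega>"
  shows "d_open \<Omega> d U"
  unfolding d_open_def
proof (intro conjI ballI \<open>U \<subseteq> \<Omega>\<close>)
  fix x assume "x \<in> U"
  then obtain \<rho> where "0 < \<rho>" and "cball x \<rho> \<subseteq> U"
    using \<open>open U\<close> open_contains_cball by blast
  moreover from this have "ball x \<rho> \<subseteq> U" by auto
  ultimately show "\<exists>r>0. {y\<in>\<Omega>. d x y < r} \<subseteq> U"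
    using inner_distance_ball_subset_ball[OF assms(1) cont assms(2)] \<open>x \<in> U\<close> \<open>U \<subseteq> \<Omega>\<close>
    by (meson order_trans subsetD)
qed

lemma continuous_on_section:
  assumes "continuous_on (A \<times> B) (\<lambda>(x, y). f x y)" and "x \<in> A"
  shows "continuous_on B (f x)"
proof -
  have "continuous_on B (\<lambda>y. (\<lambda>(x, y). f x y) (x, y))"
    by (rule continuous_on_compose2[OF assms(1)]) (use assms(2) in \<open>auto intro: continuous_intros\<close>)
  then show ?thesis by simp
qed

theorem mainTheorem3:
  fixes n :: nat and \<Omega> :: "complex set" and d :: "complex \<Rightarrow> complex \<Rightarrow> real"
  assumes "open \<Omega>" and "connected \<Omega>" and "\<Omega> \<noteq> {}"
    and "is_distance_on \<Omega> d"
    and "continuous_on (\<Omega> \<times> \<Omega>) (\<lambda>(x, y). d x y)"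
    and "is_inner n \<Omega> d"
  shows "\<forall>U. d_open \<Omega> d U \<longleftrightarrow> openin (top_of_set \<Omega>) U"
proof (intro allI iffI)
  fix U
  note cont = continuous_on_section[OF assms(5)]
  show "openin (top_of_set \<Omega>) U" if "d_open \<Omega> d U"
    using d_open_imp_open[OF assms(1,4) cont that] that
    unfolding openin_open_eq[OF assms(1)] d_open_def by blast
  show "d_open \<Omega> d U" if "openin (top_of_set \<Omega>) U"
    using open_imp_d_open[OF assms(4,6) cont] that
    unfolding openin_open_eq[OF assms(1)] by blast
qed

end
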